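(* Let $M\ge 2$, let $\gamma_1,\dots,\gamma_{M-1}$ be nonzero real numbers and $J_1,\dots,J_{M-1}$ real numbers, and consider on the open chain of $M$ sites $$H_{\gamma J}=\sum_{m=1}^{M-1}\Big(J_m c_{m+1}^\dagger c_m\sigma_{m+1}^+ + \text{h.c.}\Big) - \sum_{m=1}^{M-1}\Big(\gamma_m c_{m+1}^\dagger c_m + \text{h.c.}\Big).$$ Then the subspace of states with exactly two fermions and spin on site $1$ equal to $|\uparrow\rangle$ contains at least $2^{M-1}$ linearly independent states $|\Psi\rangle$ with $H_{\gamma J}|\Psi\rangle=0$.
   Context: Each site $m$ carries one spinless fermion mode ($c_m,c_m^\dagger$, canonical anticommutation relations) and one spin-$1/2$ with Pauli matrices $\sigma_m^{x,y,z}$; $\sigma_m^{\pm}=\sigma_m^x\pm i\sigma_m^y$. $H_{\gamma J}$ conserves the total fermion number and does not act on the spin at site $1$. *)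

theory Defs
  imports Complex_Main
begin

text \<open>Basis states of the chain of M sites (sites labelled 1..M):
  a pair (S, U) where S is the set of sites occupied by a fermion and
  U is the set of sites whose spin is up.\<close>

type_synonym state = "nat set \<times> nat set"
type_synonym vec = "state \<Rightarrow> complex"

definition valid_vec :: "nat \<Rightarrow> vec \<Rightarrow> bool" where
  "valid_vec M \<psi> \<longleftrightarrow>
     (\<forall>S U. \<not> (S \<subseteq> {1..M} \<and> U \<subseteq> {1..M}) \<longrightarrow> \<psi> (S, U) = 0)"

text \<open>Jordan-Wigner sign with site ordering 1 < 2 < ... < M.\<close>
definition jw_sign :: "nat set \<Rightarrow> nat \<Rightarrow> complex" where
  "jw_sign S j = (-1) ^ card {k \<in> S. k < j}"

text \<open>Annihilation operator: c_j |T> = sign(T,j) |T - {j}> for j in T, else 0.\<close>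
definition ann :: "nat \<Rightarrow> vec \<Rightarrow> vec" where
  "ann j \<psi> = (\<lambda>(S, U). if j \<notin> S then jw_sign S j * \<psi> (insert j S, U) else 0)"

text \<open>Creation operator: c_j^dagger |T> = sign(T,j) |T + {j}> for j not in T, else 0.\<close>
definition cre :: "nat \<Rightarrow> vec \<Rightarrow> vec" where
  "cre j \<psi> = (\<lambda>(S, U). if j \<in> S then jw_sign S j * \<psi> (S - {j}, U) else 0)"

definition sx :: "nat \<Rightarrow> vec \<Rightarrow> vec" where
  "sx j \<psi> = (\<lambda>(S, U). if j \<in> U then \<psi> (S, U - {j}) else \<psi> (S, insert j U))"

definition sy :: "nat \<Rightarrow> vec \<Rightarrow> vec" where
  "sy j \<psi> = (\<lambda>(S, U). if j \<in> U then - \<i> * \<psi> (S, U - {j}) else \<i> * \<psi> (S, insert j U))"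

definition sz :: "nat \<Rightarrow> vec \<Rightarrow> vec" where
  "sz j \<psi> = (\<lambda>(S, U). if j \<in> U then \<psi> (S, U) else - \<psi> (S, U))"

definition splus :: "nat \<Rightarrow> vec \<Rightarrow> vec" where
  "splus j \<psi> = (\<lambda>b. sx j \<psi> b + \<i> * sy j \<psi> b)"

definition sminus :: "nat \<Rightarrow> vec \<Rightarrow> vec" where
  "sminus j \<psi> = (\<lambda>b. sx j \<psi> b - \<i> * sy j \<psi> b)"

text \<open>The Hermitian conjugate of J_m c_{m+1}^dag c_m sigma^+_{m+1} is
  J_m sigma^-_{m+1} c_m^dag c_{m+1}, and that of gamma_m c_{m+1}^dag c_m is
  gamma_m c_m^dag c_{m+1} (J_m, gamma_m real).\<close>
definition H_gJ :: "nat \<Rightarrow> (nat \<Rightarrow> real) \<Rightarrow> (nat \<Rightarrow> real) \<Rightarrow> vec \<Rightarrow> vec" where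
  "H_gJ M \<gamma> J \<psi> = (\<lambda>b.
     (\<Sum>m\<in>{1..M-1}.
        complex_of_real (J m) * cre (m+1) (ann m (splus (m+1) \<psi>)) b
      + complex_of_real (J m) * sminus (m+1) (cre m (ann (m+1) \<psi>)) b)
   - (\<Sum>m\<in>{1..M-1}.
        complex_of_real (\<gamma> m) * cre (m+1) (ann m \<psi>) b
      + complex_of_real (\<gamma> m) * cre m (ann (m+1) \<psi>) b))"

definition two_fermion_up1 :: "nat \<Rightarrow> vec \<Rightarrow> bool" where
  "two_fermion_up1 M \<psi> \<longleftrightarrow> valid_vec M \<psi> \<and>
     (\<forall>S U. \<psi> (S, U) \<noteq> 0 \<longrightarrow> card S = 2 \<and> 1 \<in> U)"

end

theory Submission
  imports Defs
begin

text \<open>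
  Let the two fermions sit on neighbouring sites \<open>{k, k+1}\<close> with spin amplitude \<open>f\<^sub>k\<close>.
  Every hop of \<open>H\<^sub>\<gamma>\<^sub>J\<close> then produces a configuration \<open>{p, p+2}\<close>, reached only from
  \<open>{p, p+1}\<close> (hop \<open>p+1 \<rightarrow> p+2\<close>, spin factor \<open>J\<^sub>p\<^sub>+\<^sub>1 \<sigma>\<^sup>+\<^sub>p\<^sub>+\<^sub>2 - \<gamma>\<^sub>p\<^sub>+\<^sub>1\<close>) and from
  \<open>{p+1, p+2}\<close> (hop \<open>p+1 \<rightarrow> p\<close>, spin factor \<open>J\<^sub>p \<sigma>\<^sup>-\<^sub>p\<^sub>+\<^sub>1 - \<gamma>\<^sub>p\<close>), with trivial
  Jordan-Wigner signs. So \<open>H \<Psi> = 0\<close> becomes the recursion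
  \<open>(J\<^sub>p\<^sub>+\<^sub>1 \<sigma>\<^sup>+\<^sub>p\<^sub>+\<^sub>2 - \<gamma>\<^sub>p\<^sub>+\<^sub>1) f\<^sub>p + (J\<^sub>p \<sigma>\<^sup>-\<^sub>p\<^sub>+\<^sub>1 - \<gamma>\<^sub>p) f\<^sub>p\<^sub>+\<^sub>1 = 0\<close>, \<open>1 \<le> p \<le> M-2\<close>.
  As \<open>\<gamma>\<^sub>p \<noteq> 0\<close> and \<open>(\<sigma>\<^sup>-)\<^sup>2 = 0\<close>, the second factor is invertible, so \<open>f\<^sub>1\<close> is free.
  Choosing for \<open>f\<^sub>1\<close> each of the \<open>2\<^sup>M\<^sup>-\<^sup>1\<close> spin basis states with spin 1 up gives zero
  modes that are independent already on the pair \<open>{1, 2}\<close>.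
\<close>

type_synonym spin_amp = "nat set \<Rightarrow> complex"

text \<open>The factor 2 comes from \<open>\<sigma>\<^sup>\<plusminus> = \<sigma>\<^sup>x \<plusminus> i \<sigma>\<^sup>y\<close>.\<close>

definition spin_raise :: "nat \<Rightarrow> spin_amp \<Rightarrow> spin_amp" where
  "spin_raise s g U = (if s \<in> U then 2 * g (U - {s}) else 0)"

definition spin_lower :: "nat \<Rightarrow> spin_amp \<Rightarrow> spin_amp" where
  "spin_lower s g U = (if s \<notin> U then 2 * g (insert s U) else 0)"

lemma splus_apply: "splus s \<psi> (S, U) = spin_raise s (\<lambda>V. \<psi> (S, V)) U"
  by (simp add: splus_def sx_def sy_def spin_raise_def)

lemma sminus_apply: "sminus s \<psi> (S, U) = spin_lower s (\<lambda>V. \<psi> (S, V)) U"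
  by (simp add: sminus_def sx_def sy_def spin_lower_def)

lemma cre_ann_apply:
  assumes "i \<noteq> j"
  shows "cre j (ann i \<psi>) (S, U) =
    (if j \<in> S \<and> i \<notin> S then jw_sign S j * jw_sign (S - {j}) i * \<psi> (insert i (S - {j}), U) else 0)"
  using assms by (simp add: cre_def ann_def)

definition adjacent_pair_vec :: "nat \<Rightarrow> (nat \<Rightarrow> spin_amp) \<Rightarrow> vec" where
  "adjacent_pair_vec M f = (\<lambda>(S, U). if \<exists>k\<in>{1..<M}. S = {k, Suc k} then f (Min S) U else 0)"

lemma adjacent_pair_vec_pair:
  "adjacent_pair_vec M f ({k, Suc k}, U) = (if 1 \<le> k \<and> k < M then f k U else 0)"
  by (auto simp: adjacent_pair_vec_def doubleton_eq_iff)

lemma adjacent_pair_vec_nonzero: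
  assumes "adjacent_pair_vec M f (S, U) \<noteq> 0"
  obtains k where "1 \<le> k" "k < M" "S = {k, Suc k}" "f k U \<noteq> 0"
  using assms by (auto simp: adjacent_pair_vec_def split: if_splits)

lemma splus_adjacent_pair_vec:
  "splus s (adjacent_pair_vec M f) = adjacent_pair_vec M (\<lambda>k. spin_raise s (f k))"
  by (auto simp: fun_eq_iff splus_apply adjacent_pair_vec_def spin_raise_def)

lemma hop_preimage:
  assumes "b \<in> S" "a \<notin> S" "insert a (S - {b}) = T"
  shows "a \<in> T" "b \<notin> T" "S = insert b (T - {a})"
  using assms by blast+

lemma forward_hop_adjacent_pair_vec:
  "cre (Suc (Suc p)) (ann (Suc p) (adjacent_pair_vec M f)) (S, U) =
    (if 1 \<le> p \<and> p < M \<and> S = {p, Suc (Suc p)} then f p U else 0)"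
proof (cases "S = {p, Suc (Suc p)}")
  case True
  then have below: "{k \<in> S. k < Suc (Suc p)} = {p}" "{k \<in> S - {Suc (Suc p)}. k < Suc p} = {p}"
    by auto
  have "jw_sign S (Suc (Suc p)) = -1" "jw_sign (S - {Suc (Suc p)}) (Suc p) = -1"
    unfolding jw_sign_def below by simp_all
  moreover have "insert (Suc p) (S - {Suc (Suc p)}) = {p, Suc p}" using True by auto
  ultimately show ?thesis using True by (simp add: cre_ann_apply adjacent_pair_vec_pair)
next
  case False
  have "adjacent_pair_vec M f (insert (Suc p) (S - {Suc (Suc p)}), U) = 0"
    if "Suc (Suc p) \<in> S" "Suc p \<notin> S"
  proof (rule ccontr)
    assume "adjacent_pair_vec M f (insert (Suc p) (S - {Suc (Suc p)}), U) \<noteq> 0"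
    then obtain k where "insert (Suc p) (S - {Suc (Suc p)}) = {k, Suc k}"
      by (rule adjacent_pair_vec_nonzero)
    note T = hop_preimage[OF that this]
    then have "k = p" by auto
    with T(3) False show False by auto
  qed
  with False show ?thesis by (auto simp: cre_ann_apply)
qed

lemma backward_hop_adjacent_pair_vec:
  "cre m (ann (Suc m) (adjacent_pair_vec M f)) (S, U) =
    (if Suc m < M \<and> S = {m, Suc (Suc m)} then f (Suc m) U else 0)"
proof (cases "S = {m, Suc (Suc m)}")
  case True
  then have below: "{k \<in> S. k < m} = {}" "{k \<in> S - {m}. k < Suc m} = {}"
    by auto
  have "jw_sign S m = 1" "jw_sign (S - {m}) (Suc m) = 1"
    unfolding jw_sign_def below by simp_all
  moreover have "insert (Suc m) (S - {m}) = {Suc m, Suc (Suc m)}" using True by auto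
  ultimately show ?thesis using True by (simp add: cre_ann_apply adjacent_pair_vec_pair)
next
  case False
  have "adjacent_pair_vec M f (insert (Suc m) (S - {m}), U) = 0"
    if "m \<in> S" "Suc m \<notin> S"
  proof (rule ccontr)
    assume "adjacent_pair_vec M f (insert (Suc m) (S - {m}), U) \<noteq> 0"
    then obtain k where "insert (Suc m) (S - {m}) = {k, Suc k}"
      by (rule adjacent_pair_vec_nonzero)
    note T = hop_preimage[OF that this]
    then have "k = Suc m" by auto
    with T(3) False show False by auto
  qed
  with False show ?thesis by (auto simp: cre_ann_apply)
qed

definition forward_hop_spin :: "(nat \<Rightarrow> real) \<Rightarrow> (nat \<Rightarrow> real) \<Rightarrow> nat \<Rightarrow> spin_amp \<Rightarrow> spin_amp" where
  "forward_hop_spin \<gamma> J m g U = of_real (J m) * spin_raise (Suc m) g U - of_real (\<gamma> m) * g U"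

definition backward_hop_spin :: "(nat \<Rightarrow> real) \<Rightarrow> (nat \<Rightarrow> real) \<Rightarrow> nat \<Rightarrow> spin_amp \<Rightarrow> spin_amp" where
  "backward_hop_spin \<gamma> J m g U = of_real (J m) * spin_lower (Suc m) g U - of_real (\<gamma> m) * g U"

lemma H_gJ_adjacent_pair_vec:
  "H_gJ M \<gamma> J (adjacent_pair_vec M f) (S, U) =
    (\<Sum>p\<in>{1..M-2}. if S = {p, Suc (Suc p)}
       then forward_hop_spin \<gamma> J (Suc p) (f p) U + backward_hop_spin \<gamma> J p (f (Suc p)) U else 0)"
  (is "_ = ?rhs")
proof -
  let ?\<psi> = "adjacent_pair_vec M f"
  define F where "F m = of_real (J m) * cre (Suc m) (ann m (splus (Suc m) ?\<psi>)) (S, U)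
    - of_real (\<gamma> m) * cre (Suc m) (ann m ?\<psi>) (S, U)" for m
  define B where "B m = of_real (J m) * sminus (Suc m) (cre m (ann (Suc m) ?\<psi>)) (S, U)
    - of_real (\<gamma> m) * cre m (ann (Suc m) ?\<psi>) (S, U)" for m
  have F_Suc: "F (Suc p) = (if 1 \<le> p \<and> p < M \<and> S = {p, Suc (Suc p)}
      then forward_hop_spin \<gamma> J (Suc p) (f p) U else 0)" for p
    by (simp add: F_def splus_adjacent_pair_vec forward_hop_adjacent_pair_vec forward_hop_spin_def)
  have B_eq: "B m = (if Suc m < M \<and> S = {m, Suc (Suc m)}
      then backward_hop_spin \<gamma> J m (f (Suc m)) U else 0)" for m
    by (simp add: B_def sminus_apply backward_hop_adjacent_pair_vec backward_hop_spin_def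
        spin_lower_def)
  have "{1..M-1} = {Suc 0..<Suc (M-1)}" by auto
  then have "(\<Sum>m\<in>{1..M-1}. F m) = (\<Sum>p\<in>{0..<M-1}. F (Suc p))"
    by (simp only: sum.atLeast_Suc_lessThan_Suc_shift comp_def)
  also have "\<dots> = (\<Sum>p\<in>{1..M-2}. if S = {p, Suc (Suc p)}
      then forward_hop_spin \<gamma> J (Suc p) (f p) U else 0)"
    by (rule sum.mono_neutral_cong_right) (auto simp: F_Suc)
  finally have F_sum: "(\<Sum>m\<in>{1..M-1}. F m) = \<dots>" .
  have B_sum: "(\<Sum>m\<in>{1..M-1}. B m) = (\<Sum>p\<in>{1..M-2}. if S = {p, Suc (Suc p)}
      then backward_hop_spin \<gamma> J p (f (Suc p)) U else 0)"
    by (rule sum.mono_neutral_cong_right) (auto simp: B_eq)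
  have "H_gJ M \<gamma> J ?\<psi> (S, U) = (\<Sum>m\<in>{1..M-1}. F m) + (\<Sum>m\<in>{1..M-1}. B m)"
    unfolding H_gJ_def F_def B_def sum.distrib[symmetric] sum_subtractf[symmetric]
    by (rule sum.cong) (simp_all add: algebra_simps)
  also have "\<dots> = ?rhs"
    unfolding F_sum B_sum sum.distrib[symmetric] by (rule sum.cong) simp_all
  finally show ?thesis .
qed

text \<open>Since \<open>(\<sigma>\<^sup>-)\<^sup>2 = 0\<close>, \<open>(J \<sigma>\<^sup>- - \<gamma>)\<^sup>-\<^sup>1 = - (1 + J/\<gamma> \<sigma>\<^sup>-) / \<gamma>\<close>.\<close>

definition backward_hop_spin_inv :: "(nat \<Rightarrow> real) \<Rightarrow> (nat \<Rightarrow> real) \<Rightarrow> nat \<Rightarrow> spin_amp \<Rightarrow> spin_amp" where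
  "backward_hop_spin_inv \<gamma> J m g U =
     - g U / of_real (\<gamma> m) - of_real (J m) / of_real (\<gamma> m) ^ 2 * spin_lower (Suc m) g U"

lemma backward_hop_spin_inverse:
  assumes "\<gamma> m \<noteq> 0"
  shows "backward_hop_spin \<gamma> J m (backward_hop_spin_inv \<gamma> J m g) = g"
  using assms
  by (simp add: fun_eq_iff backward_hop_spin_def backward_hop_spin_inv_def spin_lower_def
      field_simps power2_eq_square)

text \<open>Index \<open>k\<close> is the amplitude on the pair \<open>{k, k+1}\<close>; the value at \<open>0\<close> is never used.\<close>

fun zero_mode :: "(nat \<Rightarrow> real) \<Rightarrow> (nat \<Rightarrow> real) \<Rightarrow> nat set \<Rightarrow> nat \<Rightarrow> spin_amp" where
  "zero_mode \<gamma> J U\<^sub>0 0 = (\<lambda>_. 0)"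
| "zero_mode \<gamma> J U\<^sub>0 (Suc 0) = (\<lambda>U. of_bool (U = U\<^sub>0))"
| "zero_mode \<gamma> J U\<^sub>0 (Suc (Suc p)) = backward_hop_spin_inv \<gamma> J (Suc p)
     (\<lambda>U. - forward_hop_spin \<gamma> J (Suc (Suc p)) (zero_mode \<gamma> J U\<^sub>0 (Suc p)) U)"

lemma zero_mode_balance:
  assumes "1 \<le> p" "\<gamma> p \<noteq> 0"
  shows "forward_hop_spin \<gamma> J (Suc p) (zero_mode \<gamma> J U\<^sub>0 p) U
       + backward_hop_spin \<gamma> J p (zero_mode \<gamma> J U\<^sub>0 (Suc p)) U = 0"
proof -
  obtain q where "p = Suc q" using assms(1) by (cases p) auto
  then show ?thesis using backward_hop_spin_inverse[of \<gamma> p J, OF assms(2)] by simp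
qed

lemma H_gJ_zero_mode:
  assumes "\<forall>m\<in>{1..M-1}. \<gamma> m \<noteq> 0"
  shows "H_gJ M \<gamma> J (adjacent_pair_vec M (zero_mode \<gamma> J U\<^sub>0)) = (\<lambda>_. 0)"
proof
  fix b :: state
  obtain S U where "b = (S, U)" by fastforce
  moreover have "\<gamma> p \<noteq> 0" if "p \<in> {1..M-2}" for p using assms that by auto
  ultimately show "H_gJ M \<gamma> J (adjacent_pair_vec M (zero_mode \<gamma> J U\<^sub>0)) b = 0"
    by (simp add: H_gJ_adjacent_pair_vec zero_mode_balance sum.neutral)
qed

definition up1_configs :: "nat \<Rightarrow> nat set set" where
  "up1_configs M = {U. 1 \<in> U \<and> U \<subseteq> {1..M}}"

lemma up1_configs_of_Diff_singleton:
  assumes "s \<in> {1..M}" "U - {s} \<in> up1_configs M"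
  shows "U \<in> up1_configs M"
  using assms unfolding up1_configs_def by blast

lemma zero_mode_support:
  "U\<^sub>0 \<in> up1_configs M \<Longrightarrow> p < M \<Longrightarrow> zero_mode \<gamma> J U\<^sub>0 p U \<noteq> 0 \<Longrightarrow> U \<in> up1_configs M"
proof (induction \<gamma> J U\<^sub>0 p arbitrary: U rule: zero_mode.induct)
  case (3 \<gamma> J U\<^sub>0 p)
  let ?f = "zero_mode \<gamma> J U\<^sub>0 (Suc p)"
  define g where "g = (\<lambda>V. - forward_hop_spin \<gamma> J (Suc (Suc p)) ?f V)"
  have g_support: "V \<in> up1_configs M" if "g V \<noteq> 0" for V
  proof -
    from that have "?f V \<noteq> 0 \<or> Suc (Suc (Suc p)) \<in> V \<and> ?f (V - {Suc (Suc (Suc p))}) \<noteq> 0"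
      by (auto simp: g_def forward_hop_spin_def spin_raise_def split: if_splits)
    with "3.IH"[of V] "3.IH"[of "V - {Suc (Suc (Suc p))}"] "3.prems"(1,2) show ?thesis
      by (auto intro: up1_configs_of_Diff_singleton[of "Suc (Suc (Suc p))"])
  qed
  have "backward_hop_spin_inv \<gamma> J (Suc p) g U \<noteq> 0"
    using "3.prems"(3) by (simp add: g_def)
  then have "g U \<noteq> 0 \<or> Suc (Suc p) \<notin> U \<and> g (insert (Suc (Suc p)) U) \<noteq> 0"
    by (auto simp: backward_hop_spin_inv_def spin_lower_def split: if_splits)
  with g_support show ?case by (auto simp: up1_configs_def)
qed auto

lemma card_up1_configs:
  assumes "1 \<le> M"
  shows "card (up1_configs M) = 2 ^ (M - 1)"
proof -
  have "up1_configs M = insert 1 ` Pow {2..M}"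
  proof (rule set_eqI)
    fix U
    have "U \<in> up1_configs M \<longleftrightarrow> 1 \<in> U \<and> U - {1} \<subseteq> {2..M}"
      using assms by (auto simp: up1_configs_def)
    also have "\<dots> \<longleftrightarrow> U \<in> insert 1 ` Pow {2..M}"
    proof
      assume "1 \<in> U \<and> U - {1} \<subseteq> {2..M}"
      then have "U = insert 1 (U - {1})" "U - {1} \<in> Pow {2..M}" by auto
      then show "U \<in> insert 1 ` Pow {2..M}" by (rule image_eqI)
    qed auto
    finally show "U \<in> up1_configs M \<longleftrightarrow> U \<in> insert 1 ` Pow {2..M}" .
  qed
  moreover have "inj_on (insert 1) (Pow {2..M})"
  proof (rule inj_onI)
    fix A B
    assume "A \<in> Pow {2..M}" "B \<in> Pow {2..M}" "insert 1 A = insert 1 B"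
    moreover from calculation have "1 \<notin> A" "1 \<notin> B" by auto
    ultimately show "A = B" by (simp add: insert_ident)
  qed
  ultimately show ?thesis by (simp add: card_image card_Pow)
qed

lemma finite_up1_configs: "finite (up1_configs M)"
  by (rule finite_subset[of _ "Pow {1..M}"]) (auto simp: up1_configs_def)

lemma two_fermion_up1_adjacent_pair_vec:
  assumes "\<And>k U. 1 \<le> k \<Longrightarrow> k < M \<Longrightarrow> f k U \<noteq> 0 \<Longrightarrow> U \<in> up1_configs M"
  shows "two_fermion_up1 M (adjacent_pair_vec M f)"
proof -
  have support: "card S = 2 \<and> S \<subseteq> {1..M} \<and> 1 \<in> U \<and> U \<subseteq> {1..M}"
    if "adjacent_pair_vec M f (S, U) \<noteq> 0" for S U
  proof -
    from that obtain k where k: "1 \<le> k" "k < M" "S = {k, Suc k}" "f k U \<noteq> 0"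
      by (rule adjacent_pair_vec_nonzero)
    with assms[OF k(1,2,4)] show ?thesis by (auto simp: up1_configs_def)
  qed
  show ?thesis
    unfolding two_fermion_up1_def valid_vec_def
  proof (intro conjI allI impI)
    fix S U
    assume "adjacent_pair_vec M f (S, U) \<noteq> 0"
    with support[of S U] show "card S = 2" "1 \<in> U" by simp_all
  next
    fix S U
    assume "\<not> (S \<subseteq> {1..M} \<and> U \<subseteq> {1..M})"
    with support[of S U] show "adjacent_pair_vec M f (S, U) = 0" by blast
  qed
qed

lemma lincomb_eq_zero_imp_coeffs_zero:
  fixes v :: "'i \<Rightarrow> 'x \<Rightarrow> 'a :: comm_ring_1"
  assumes "finite I" "\<forall>i\<in>I. \<forall>j\<in>I. v i (x j) = (if i = j then 1 else 0)"
    and "(\<lambda>y. \<Sum>i\<in>I. a i * v i y) = (\<lambda>_. 0)"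
  shows "\<forall>j\<in>I. a j = 0"
proof
  fix j
  assume "j \<in> I"
  have "0 = (\<Sum>i\<in>I. a i * v i (x j))" using fun_cong[OF assms(3), of "x j"] by simp
  also have "\<dots> = (\<Sum>i\<in>I. if i = j then a i else 0)"
    using assms(2) \<open>j \<in> I\<close> by (intro sum.cong) auto
  also have "\<dots> = a j" using assms(1) \<open>j \<in> I\<close> by simp
  finally show "a j = 0" by simp
qed

theorem mainTheorem4:
  fixes M :: nat and \<gamma> J :: "nat \<Rightarrow> real"
  assumes "M \<ge> 2"
    and "\<forall>m\<in>{1..M-1}. \<gamma> m \<noteq> 0"
  shows "\<exists>\<Psi> :: nat \<Rightarrow> vec.
           (\<forall>i<2^(M-1). two_fermion_up1 M (\<Psi> i) \<and> H_gJ M \<gamma> J (\<Psi> i) = (\<lambda>_. 0))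
         \<and> (\<forall>a :: nat \<Rightarrow> complex.
              (\<lambda>b. \<Sum>i<2^(M-1). a i * \<Psi> i b) = (\<lambda>_. 0) \<longrightarrow> (\<forall>i<2^(M-1). a i = 0))"
proof -
  have "card (up1_configs M) = 2 ^ (M - 1)"
    using assms(1) by (simp add: card_up1_configs)
  then obtain enc where enc: "bij_betw enc {..<2 ^ (M - 1) :: nat} (up1_configs M)"
    using ex_bij_betw_nat_finite[OF finite_up1_configs[of M]] by (metis atLeast0LessThan)
  define \<Psi> where "\<Psi> i = adjacent_pair_vec M (zero_mode \<gamma> J (enc i))" for i
  have sector: "two_fermion_up1 M (\<Psi> i)" if "i < 2 ^ (M - 1)" for i
  proof -
    have "enc i \<in> up1_configs M" using bij_betwE[OF enc] that by blast
    then show ?thesis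
      unfolding \<Psi>_def by (rule two_fermion_up1_adjacent_pair_vec[OF zero_mode_support])
  qed
  have kernel: "H_gJ M \<gamma> J (\<Psi> i) = (\<lambda>_. 0)" for i
    unfolding \<Psi>_def using assms(2) by (rule H_gJ_zero_mode)
  have dual: "\<forall>i\<in>{..<2 ^ (M - 1)}. \<forall>j\<in>{..<2 ^ (M - 1)}.
      \<Psi> i ({1, Suc 1}, enc j) = (if i = j then 1 else 0)"
    using assms(1) bij_betw_imp_inj_on[OF enc]
    by (auto simp: \<Psi>_def adjacent_pair_vec_pair inj_on_eq_iff)
  have independent: "\<forall>i<2 ^ (M - 1). a i = 0"
    if "(\<lambda>b. \<Sum>i<2 ^ (M - 1). a i * \<Psi> i b) = (\<lambda>_. 0)" for a :: "nat \<Rightarrow> complex"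
    using lincomb_eq_zero_imp_coeffs_zero[OF finite_lessThan dual that] by simp
  show ?thesis
  proof (intro exI[of _ \<Psi>] conjI)
    show "\<forall>i<2 ^ (M - 1). two_fermion_up1 M (\<Psi> i) \<and> H_gJ M \<gamma> J (\<Psi> i) = (\<lambda>_. 0)"
      by (simp add: sector kernel)
    show "\<forall>a. (\<lambda>b. \<Sum>i<2 ^ (M - 1). a i * \<Psi> i b) = (\<lambda>_. 0) \<longrightarrow> (\<forall>i<2 ^ (M - 1). a i = 0)"
    proof (rule allI, rule impI)
      fix a :: "nat \<Rightarrow> complex"
      assume "(\<lambda>b. \<Sum>i<2 ^ (M - 1). a i * \<Psi> i b) = (\<lambda>_. 0)"
      then show "\<forall>i<2 ^ (M - 1). a i = 0" by (rule independent)
    qed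
  qed
qed

end
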